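(* $A_4(\frac13,\frac13,\frac13,0,0)$ has a unique rational solution of Type B, namely $(f_0,f_1,f_2,f_3,f_4)=(\frac t3,\frac t3,\frac t3,0,0)$.
   Context: The $A_4^{(1)}$ Painlevé equation $A_4(\alpha_0,\dots,\alpha_4)$ is the system for five functions $f_0,\dots,f_4$ of $t$ (indices in $\mathbb{Z}/5\mathbb{Z}$, ${}'=d/dt$): $f_j'=f_j(f_{j+1}-f_{j+2}+f_{j+3}-f_{j+4})+\alpha_j$ ($j=0,\dots,4$), $f_0+\dots+f_4=t$. A rational solution is a tuple of rational functions satisfying it. It is of Type B if for some $i$, $f_i,f_{i+1},f_{i+2}$ have a pole at $t=\infty$ and $f_{i+3},f_{i+4}$ are regular there. *)

theory Defs
  imports "HOL-Computational_Algebra.Computational_Algebra"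
    "HOL-Computational_Algebra.Normalized_Fraction" "HOL-Computational_Algebra.Field_as_Ring"
begin

type_synonym ratfun = "complex poly fract"

definition rconst :: "complex \<Rightarrow> ratfun" where
  "rconst c = Fract [:c:] 1"

definition tvar :: ratfun where
  "tvar = Fract [:0, 1:] 1"

definition rderiv :: "ratfun \<Rightarrow> ratfun" where
  "rderiv f = (case quot_of_fract f of (p, q) \<Rightarrow> Fract (pderiv p * q - p * pderiv q) (q * q))"

definition pole_at_inf :: "ratfun \<Rightarrow> bool" where
  "pole_at_inf f = (case quot_of_fract f of (p, q) \<Rightarrow> degree q < degree p)"

definition regular_at_inf :: "ratfun \<Rightarrow> bool" where
  "regular_at_inf f = (\<not> pole_at_inf f)"

text \<open>Rational solution of A4(alpha_0,...,alpha_4); indices taken mod 5, only f 0..f 4 matter.\<close>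
definition A4_rational_solution :: "(nat \<Rightarrow> complex) \<Rightarrow> (nat \<Rightarrow> ratfun) \<Rightarrow> bool" where
  "A4_rational_solution \<alpha> f \<longleftrightarrow>
     (\<forall>j<5. rderiv (f j) =
        f j * (f ((j+1) mod 5) - f ((j+2) mod 5) + f ((j+3) mod 5) - f ((j+4) mod 5))
        + rconst (\<alpha> j))
     \<and> (\<Sum>j<5. f j) = tvar"

definition type_B :: "(nat \<Rightarrow> ratfun) \<Rightarrow> bool" where
  "type_B f \<longleftrightarrow> (\<exists>i<5. pole_at_inf (f i) \<and> pole_at_inf (f ((i+1) mod 5))
      \<and> pole_at_inf (f ((i+2) mod 5))
      \<and> regular_at_inf (f ((i+3) mod 5)) \<and> regular_at_inf (f ((i+4) mod 5)))"

end

(*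
  Substituting z + X (a finite point z) or 1/X (infinity) for t embeds the rational functions into
  the complex Laurent series compatibly with d/dt, so the system can be studied coefficientwise.

  At a finite point the lowest coefficients of the f_j satisfy a small linear system that forces
  at most simple poles with integer residues. At infinity, the three components of a Type B
  solution that have poles all have principal part t/3, and the coefficients of 1/t of the
  components are determined by the parameters. Let i be the index of the first pole. For i = 0
  the coefficients at infinity are determined recursively and give (t/3, t/3, t/3, 0, 0). For
  i = 2, 3 the coefficient of 1/t at infinity of f_i is -4/3 resp. -5/3, which is not a sum of
  integer residues. For i = 1, 4 the component f_0 resp. f_2 satisfies a Riccati equation; its
  residues all lie in {0, 1} resp. {0, -1}, while their sum, the coefficient of 1/t at infinity,
  is -1 resp. 1.
*)

theory Submission
  imports Defs
begin

unbundle Formal_Power_Series.fps_syntax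
unbundle Formal_Laurent_Series.fps_syntax

section \<open>Laurent expansions of rational functions\<close>

definition fls_poly :: "complex fls \<Rightarrow> complex poly \<Rightarrow> complex fls" where
  "fls_poly x p = poly (map_poly fls_const p) x"

lemma fls_poly_pCons: "fls_poly x (pCons a p) = fls_const a + x * fls_poly x p"
  by (simp add: fls_poly_def map_poly_pCons)

lemma fls_poly_0 [simp]: "fls_poly x 0 = 0"
  by (simp add: fls_poly_def)

lemma fls_poly_const [simp]: "fls_poly x [:a:] = fls_const a"
  by (simp add: fls_poly_pCons)

lemma fls_poly_1 [simp]: "fls_poly x 1 = 1"
  by (simp add: one_pCons fls_poly_pCons del: pCons_one)

lemma fls_poly_add: "fls_poly x (p + q) = fls_poly x p + fls_poly x q"
proof (induction p arbitrary: q rule: pCons_induct)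
  case (pCons a p)
  show ?case
  proof (cases q)
    case (pCons b q')
    then show ?thesis using pCons.IH[of q']
      by (simp add: fls_poly_pCons algebra_simps fls_plus_const[symmetric])
  qed
qed simp

lemma fls_poly_smult: "fls_poly x (smult a p) = fls_const a * fls_poly x p"
  by (induction p rule: pCons_induct) (simp_all add: fls_poly_pCons algebra_simps)

lemma fls_poly_mult: "fls_poly x (p * q) = fls_poly x p * fls_poly x q"
  by (induction p rule: pCons_induct)
     (simp_all add: fls_poly_pCons fls_poly_add fls_poly_smult algebra_simps)

lemma fls_poly_diff: "fls_poly x (p - q) = fls_poly x p - fls_poly x q"
  using fls_poly_add[of x "p - q" q] by simp

lemma fls_poly_power: "fls_poly x (p ^ n) = fls_poly x p ^ n"
  by (induction n) (simp_all add: fls_poly_mult)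

lemma fls_poly_pderiv:
  assumes add: "\<And>f g. D (f + g) = D f + D g"
    and mult: "\<And>f g. D (f * g) = D f * g + f * D g"
    and const: "\<And>c. D (fls_const c) = 0"
  shows "D (fls_poly x p) = fls_poly x (pderiv p) * D x"
proof (induction p rule: pCons_induct)
  case 0
  show ?case using const[of 0] by simp
next
  case (pCons a p)
  show ?case
    by (simp add: fls_poly_pCons pderiv_pCons fls_poly_add add mult const pCons.IH algebra_simps)
qed

lemma derivation_divide:
  fixes D :: "complex fls \<Rightarrow> complex fls"
  assumes mult: "\<And>f g. D (f * g) = D f * g + f * D g" and "b \<noteq> 0"
  shows "D (a / b) = (D a * b - a * D b) / (b * b)"
proof -
  have "D a = D (a / b) * b + (a / b) * D b"
    using mult[of "a / b" b] assms(2) by simp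
  then show ?thesis using assms(2) by (simp add: field_simps)
qed

definition fls_transcendental :: "complex fls \<Rightarrow> bool" where
  "fls_transcendental x \<longleftrightarrow> (\<forall>q. q \<noteq> 0 \<longrightarrow> fls_poly x q \<noteq> 0)"

text \<open>Substitution of \<open>x\<close> for \<open>t\<close>; it is a ring homomorphism when \<open>x\<close> is transcendental.\<close>

definition ratfun_expand :: "complex fls \<Rightarrow> ratfun \<Rightarrow> complex fls" where
  "ratfun_expand x f = (case quot_of_fract f of (p, q) \<Rightarrow> fls_poly x p / fls_poly x q)"

lemma ratfun_expand_0 [simp]: "ratfun_expand x 0 = 0"
  by (simp add: ratfun_expand_def)

lemma ratfun_expand_1 [simp]: "ratfun_expand x 1 = 1"
  by (simp add: ratfun_expand_def)

context
  fixes x :: "complex fls"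
  assumes trans: "fls_transcendental x"
begin

lemma ratfun_expand_Fract:
  assumes "q \<noteq> 0"
  shows "ratfun_expand x (Fract p q) = fls_poly x p / fls_poly x q"
proof -
  obtain p' q' where pq: "quot_of_fract (Fract p q) = (p', q')" by fastforce
  have q': "q' \<noteq> 0" using snd_quot_of_fract_nonzero[of "Fract p q"] pq by simp
  have "Fract p' q' = Fract p q" using Fract_quot_of_fract[of "Fract p q"] pq by simp
  then have "fls_poly x p' * fls_poly x q = fls_poly x p * fls_poly x q'"
    using q' assms by (simp add: eq_fract fls_poly_mult[symmetric])
  moreover have "fls_poly x q \<noteq> 0" "fls_poly x q' \<noteq> 0"
    using trans assms q' by (auto simp: fls_transcendental_def)
  ultimately show ?thesis using pq by (simp add: ratfun_expand_def field_simps)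
qed

lemma ratfun_expand_add: "ratfun_expand x (f + g) = ratfun_expand x f + ratfun_expand x g"
proof -
  obtain a b where f: "f = Fract a b" "b \<noteq> 0" by (cases f) auto
  obtain c d where g: "g = Fract c d" "d \<noteq> 0" by (cases g) auto
  have "fls_poly x b \<noteq> 0" "fls_poly x d \<noteq> 0" using trans f g by (auto simp: fls_transcendental_def)
  then show ?thesis using f g by (simp add: ratfun_expand_Fract fls_poly_add fls_poly_mult field_simps)
qed

lemma ratfun_expand_mult: "ratfun_expand x (f * g) = ratfun_expand x f * ratfun_expand x g"
proof -
  obtain a b where f: "f = Fract a b" "b \<noteq> 0" by (cases f) auto
  obtain c d where g: "g = Fract c d" "d \<noteq> 0" by (cases g) auto
  have "fls_poly x b \<noteq> 0" "fls_poly x d \<noteq> 0" using trans f g by (auto simp: fls_transcendental_def)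
  then show ?thesis using f g by (simp add: ratfun_expand_Fract fls_poly_mult)
qed

lemma ratfun_expand_diff: "ratfun_expand x (f - g) = ratfun_expand x f - ratfun_expand x g"
  using ratfun_expand_add[of "f - g" g] by simp

lemma ratfun_expand_sum: "ratfun_expand x (\<Sum>z\<in>A. g z) = (\<Sum>z\<in>A. ratfun_expand x (g z))"
  by (induction A rule: infinite_finite_induct) (simp_all add: ratfun_expand_add)

lemma ratfun_expand_inverse: "ratfun_expand x (inverse f) = inverse (ratfun_expand x f)"
proof (cases "f = 0")
  case False
  then have "ratfun_expand x (inverse f) * ratfun_expand x f = 1"
    by (simp flip: ratfun_expand_mult)
  then show ?thesis by (metis inverse_unique mult.commute)
qed simp

lemma ratfun_expand_rconst: "ratfun_expand x (rconst c) = fls_const c"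
  by (simp add: rconst_def ratfun_expand_Fract)

lemma ratfun_expand_tvar: "ratfun_expand x tvar = x"
  by (simp add: tvar_def ratfun_expand_Fract fls_poly_pCons)

lemma ratfun_expand_eq_0_iff: "ratfun_expand x f = 0 \<longleftrightarrow> f = 0"
proof
  assume E0: "ratfun_expand x f = 0"
  obtain a b where f: "f = Fract a b" "b \<noteq> 0" by (cases f) auto
  then have "fls_poly x b \<noteq> 0" using trans by (auto simp: fls_transcendental_def)
  then have "fls_poly x a = 0" using E0 f by (simp add: ratfun_expand_Fract)
  then have "a = 0" using trans by (auto simp: fls_transcendental_def)
  then show "f = 0" using f by (simp add: Zero_fract_def eq_fract)
qed simp

lemma ratfun_expand_inj: "ratfun_expand x f = ratfun_expand x g \<longleftrightarrow> f = g"
  using ratfun_expand_eq_0_iff[of "f - g"] by (simp add: ratfun_expand_diff)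

lemma ratfun_expand_rderiv:
  assumes add: "\<And>f g. D (f + g) = D f + D g"
    and mult: "\<And>f g. D (f * g) = D f * g + f * D g"
    and const: "\<And>c. D (fls_const c) = 0"
    and Dx: "D x = 1"
  shows "ratfun_expand x (rderiv f) = D (ratfun_expand x f)"
proof -
  obtain p q where pq: "quot_of_fract f = (p, q)" by fastforce
  have q: "q \<noteq> 0" using snd_quot_of_fract_nonzero[of f] pq by simp
  have nq: "fls_poly x q \<noteq> 0" using trans q by (auto simp: fls_transcendental_def)
  have dp: "D (fls_poly x p) = fls_poly x (pderiv p)" and dq: "D (fls_poly x q) = fls_poly x (pderiv q)"
    using fls_poly_pderiv[OF add mult const] Dx by auto
  have "ratfun_expand x (rderiv f) = ratfun_expand x (Fract (pderiv p * q - p * pderiv q) (q * q))"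
    by (simp add: rderiv_def pq)
  also have "\<dots> = (fls_poly x (pderiv p) * fls_poly x q - fls_poly x p * fls_poly x (pderiv q))
      / (fls_poly x q * fls_poly x q)"
    using q by (simp add: ratfun_expand_Fract fls_poly_mult fls_poly_diff)
  also have "\<dots> = D (fls_poly x p / fls_poly x q)"
    by (simp add: derivation_divide[OF mult nq] dp dq)
  finally show ?thesis by (simp add: ratfun_expand_def pq)
qed

end

definition fls_at :: "complex \<Rightarrow> complex fls" where
  "fls_at z = fls_const z + fls_X"

lemma fls_poly_at_fps: "\<exists>F. fls_poly (fls_at z) p = fps_to_fls F \<and> F $ 0 = poly p z"
proof (induction p rule: pCons_induct)
  case (pCons a p)
  then obtain F where F: "fls_poly (fls_at z) p = fps_to_fls F" "F $ 0 = poly p z" by blast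
  have "fls_poly (fls_at z) (pCons a p) = fps_to_fls (fps_const a + (fps_const z + fps_X) * F)"
    using F(1) by (simp add: fls_poly_pCons fls_at_def fls_times_fps_to_fls)
  moreover have "(fps_const a + (fps_const z + fps_X) * F) $ 0 = poly (pCons a p) z"
    using F by (simp add: fps_mult_nth)
  ultimately show ?case by blast
qed (intro exI[of _ 0], simp)

lemma fls_poly_at_nth_neg: "k < 0 \<Longrightarrow> fls_poly (fls_at z) p $$ k = 0"
  using fls_poly_at_fps[of z p] by auto

lemma fls_poly_at_nth_0: "fls_poly (fls_at z) p $$ 0 = poly p z"
  using fls_poly_at_fps[of z p] by auto

lemma fls_poly_at_subdegree:
  assumes "poly p z \<noteq> 0"
  shows "fls_subdegree (fls_poly (fls_at z) p) = 0"
  using assms by (intro fls_subdegree_eqI) (simp_all add: fls_poly_at_nth_0 fls_poly_at_nth_neg)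

lemma fls_transcendental_at: "fls_transcendental (fls_at z)"
  unfolding fls_transcendental_def
proof (intro allI impI)
  fix q :: "complex poly" assume "q \<noteq> 0"
  then obtain r where r: "q = [:-z, 1:] ^ order z q * r" "\<not> [:-z, 1:] dvd r"
    using order_decomp by blast
  have "poly r z \<noteq> 0" using r(2) by (simp add: poly_eq_0_iff_dvd)
  then have "fls_poly (fls_at z) r \<noteq> 0" by (metis fls_nonzeroI fls_poly_at_nth_0)
  moreover have "fls_poly (fls_at z) q = fls_X ^ order z q * fls_poly (fls_at z) r"
    by (subst r(1)) (simp add: fls_poly_mult fls_poly_power fls_poly_pCons fls_at_def)
  ultimately show "fls_poly (fls_at z) q \<noteq> 0" by simp
qed

lemma ratfun_expand_at_rderiv:
  "ratfun_expand (fls_at z) (rderiv f) = fls_deriv (ratfun_expand (fls_at z) f)"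
  by (rule ratfun_expand_rderiv[OF fls_transcendental_at]) (simp_all add: fls_at_def algebra_simps)

lemma ratfun_expand_at_regular:
  assumes "poly (snd (quot_of_fract f)) z \<noteq> 0" "k < 0"
  shows "ratfun_expand (fls_at z) f $$ k = 0"
proof -
  obtain p q where pq: "quot_of_fract f = (p, q)" by fastforce
  have sq: "fls_subdegree (fls_poly (fls_at z) q) = 0"
    using assms(1) pq by (simp add: fls_poly_at_subdegree)
  show ?thesis
  proof (cases "fls_poly (fls_at z) p = 0")
    case False
    have "0 \<le> fls_subdegree (fls_poly (fls_at z) p)"
      using False by (intro fls_subdegree_geI) (simp_all add: fls_poly_at_nth_neg)
    then show ?thesis
      using fls_divide_nth_below[of k "fls_poly (fls_at z) p" "fls_poly (fls_at z) q"] assms(2) sq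
      by (simp add: ratfun_expand_def pq)
  qed (simp add: ratfun_expand_def pq)
qed

lemma ratfun_expand_at_pole:
  assumes "poly (snd (quot_of_fract f)) z = 0"
  shows "\<exists>k<0. ratfun_expand (fls_at z) f $$ k \<noteq> 0"
proof -
  obtain p q where pq: "quot_of_fract f = (p, q)" by fastforce
  have q: "q \<noteq> 0" using snd_quot_of_fract_nonzero[of f] pq by simp
  have qz: "poly q z = 0" using assms pq by simp
  have "poly p z \<noteq> 0"
  proof
    assume "poly p z = 0"
    then have "[:-z, 1:] dvd p" "[:-z, 1:] dvd q" using qz by (auto simp: poly_eq_0_iff_dvd)
    then have "is_unit [:-z, 1:]"
      using coprime_quot_of_fract[of f] pq by (metis coprime_common_divisor fst_conv snd_conv)
    then show False by (simp add: is_unit_iff_degree)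
  qed
  then have sp: "fls_subdegree (fls_poly (fls_at z) p) = 0" and np: "fls_poly (fls_at z) p \<noteq> 0"
    by (simp_all add: fls_poly_at_subdegree) (metis fls_nonzeroI fls_poly_at_nth_0)
  have nq: "fls_poly (fls_at z) q \<noteq> 0"
    using fls_transcendental_at q by (auto simp: fls_transcendental_def)
  have "1 \<le> fls_subdegree (fls_poly (fls_at z) q)"
  proof (rule fls_subdegree_geI[OF nq])
    fix k :: int assume "k < 1"
    then show "fls_poly (fls_at z) q $$ k = 0"
      using qz by (cases "k = 0") (simp_all add: fls_poly_at_nth_0 fls_poly_at_nth_neg)
  qed
  then have "fls_subdegree (ratfun_expand (fls_at z) f) < 0"
    using fls_divide_subdegree[OF np nq] sp by (simp add: ratfun_expand_def pq)
  moreover have "ratfun_expand (fls_at z) f \<noteq> 0" using np nq by (simp add: ratfun_expand_def pq)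
  ultimately show ?thesis using nth_fls_subdegree_nonzero by blast
qed

lemma regular_everywhere_imp_polynomial:
  assumes "\<And>z k. k < 0 \<Longrightarrow> ratfun_expand (fls_at z) f $$ k = 0"
  shows "snd (quot_of_fract f) = 1"
proof -
  obtain p q where pq: "quot_of_fract f = (p, q)" by fastforce
  have "poly q z \<noteq> 0" for z
    using ratfun_expand_at_pole[of f z] assms pq by force
  then obtain a where a: "q = [:a:]"
    using fundamental_theorem_of_algebra_alt[of q] by auto
  have "unit_factor q = 1" using unit_factor_snd_quot_of_fract[of f] pq by simp
  then show ?thesis using pq a by (simp add: unit_factor_poly_def)
qed

text \<open>At infinity the coordinate is \<open>X = 1/t\<close>, in which \<open>d/dt = -X\<^sup>2 d/dX\<close>.\<close>

definition fls_deriv_inf :: "complex fls \<Rightarrow> complex fls" where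
  "fls_deriv_inf g = - (fls_X * fls_X) * fls_deriv g"

lemma fls_deriv_inf_nth: "fls_deriv_inf g $$ n = - of_int (n - 1) * g $$ (n - 1)"
proof -
  have "(fls_X * (fls_X * fls_deriv g)) $$ n = fls_deriv g $$ (n - 2)"
    by (simp add: fls_X_times_conv_shift(1))
  then show ?thesis by (simp add: fls_deriv_inf_def mult.assoc algebra_simps)
qed

lemma fls_deriv_inf_add: "fls_deriv_inf (f + g) = fls_deriv_inf f + fls_deriv_inf g"
  by (simp add: fls_deriv_inf_def algebra_simps)

lemma fls_deriv_inf_mult: "fls_deriv_inf (f * g) = fls_deriv_inf f * g + f * fls_deriv_inf g"
  by (simp add: fls_deriv_inf_def algebra_simps)

lemma fls_deriv_inf_const [simp]: "fls_deriv_inf (fls_const c) = 0"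
  by (simp add: fls_deriv_inf_def)

lemma fls_deriv_inf_X_inv: "fls_deriv_inf fls_X_inv = (1 :: complex fls)"
proof -
  have "fls_X * fls_X_inv = (1 :: complex fls)"
    by (simp add: fls_X_times_conv_shift fls_X_inv_conv_shift_1)
  then show ?thesis by (simp add: fls_deriv_inf_def power2_eq_square algebra_simps)
qed

lemma fls_poly_inf_nth:
  "fls_poly fls_X_inv p $$ n = (if n \<le> 0 then coeff p (nat (- n)) else 0)"
proof (induction p arbitrary: n rule: pCons_induct)
  case (pCons a p)
  have "fls_poly fls_X_inv (pCons a p) $$ n = (if n = 0 then a else 0) + fls_poly fls_X_inv p $$ (n + 1)"
    by (simp add: fls_poly_pCons fls_X_inv_times_conv_shift)
  also have "\<dots> = (if n \<le> 0 then coeff (pCons a p) (nat (- n)) else 0)"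
  proof (cases "n < 0")
    case True
    then have "nat (- n) = Suc (nat (- (n + 1)))" by linarith
    then show ?thesis using True pCons.IH[of "n + 1"] by simp
  qed (use pCons.IH[of "n + 1"] in auto)
  finally show ?case .
qed simp

lemma fls_poly_inf_subdegree:
  assumes "p \<noteq> 0"
  shows "fls_subdegree (fls_poly fls_X_inv p) = - int (degree p)"
proof (rule fls_subdegree_eqI)
  show "fls_poly fls_X_inv p $$ (- int (degree p)) \<noteq> 0" using assms by (simp add: fls_poly_inf_nth)
  fix k :: int assume "k < - int (degree p)"
  then show "fls_poly fls_X_inv p $$ k = 0" by (simp add: fls_poly_inf_nth coeff_eq_0)
qed

lemma fls_transcendental_X_inv: "fls_transcendental fls_X_inv"
  unfolding fls_transcendental_def
proof (intro allI impI)
  fix q :: "complex poly" assume "q \<noteq> 0"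
  then have "fls_poly fls_X_inv q $$ (- int (degree q)) \<noteq> 0" by (simp add: fls_poly_inf_nth)
  then show "fls_poly fls_X_inv q \<noteq> 0" by (metis fls_nonzeroI)
qed

lemma ratfun_expand_inf_rderiv:
  "ratfun_expand fls_X_inv (rderiv f) = fls_deriv_inf (ratfun_expand fls_X_inv f)"
  by (rule ratfun_expand_rderiv[OF fls_transcendental_X_inv fls_deriv_inf_add fls_deriv_inf_mult
      fls_deriv_inf_const fls_deriv_inf_X_inv])

lemma ratfun_expand_inf_subdegree:
  assumes "f \<noteq> 0"
  shows "fls_subdegree (ratfun_expand fls_X_inv f)
    = int (degree (snd (quot_of_fract f))) - int (degree (fst (quot_of_fract f)))"
proof -
  obtain p q where pq: "quot_of_fract f = (p, q)" by fastforce
  have "q \<noteq> 0" "p \<noteq> 0"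
    using snd_quot_of_fract_nonzero[of f] fst_quot_of_fract_eq_0_iff[of f] assms pq by auto
  then have "fls_poly fls_X_inv q \<noteq> 0" "fls_poly fls_X_inv p \<noteq> 0"
    using fls_transcendental_X_inv by (auto simp: fls_transcendental_def)
  then show ?thesis using fls_poly_inf_subdegree \<open>q \<noteq> 0\<close> \<open>p \<noteq> 0\<close>
    by (simp add: ratfun_expand_def pq fls_divide_subdegree)
qed

lemma pole_at_inf_iff: "pole_at_inf f \<longleftrightarrow> (\<exists>k<0. ratfun_expand fls_X_inv f $$ k \<noteq> 0)"
proof (cases "f = 0")
  case False
  then have "ratfun_expand fls_X_inv f \<noteq> 0"
    by (simp add: ratfun_expand_eq_0_iff[OF fls_transcendental_X_inv])
  then have "(\<exists>k<0. ratfun_expand fls_X_inv f $$ k \<noteq> 0) \<longleftrightarrow> fls_subdegree (ratfun_expand fls_X_inv f) < 0"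
    by (metis fls_eq0_below_subdegree nth_fls_subdegree_nonzero not_less order.strict_trans1)
  then show ?thesis
    using ratfun_expand_inf_subdegree[OF False]
    by (simp add: pole_at_inf_def case_prod_unfold)
qed (simp add: pole_at_inf_def)

lemma regular_at_inf_iff: "regular_at_inf f \<longleftrightarrow> (\<forall>k<0. ratfun_expand fls_X_inv f $$ k = 0)"
  by (simp add: regular_at_inf_def pole_at_inf_iff)

lemma ratfun_expand_inf_polynomial:
  "ratfun_expand fls_X_inv (Fract p 1) = fls_poly fls_X_inv p"
  by (simp add: ratfun_expand_Fract[OF fls_transcendental_X_inv])

section \<open>Sum of residues\<close>

definition simple_fraction :: "complex \<Rightarrow> ratfun" where
  "simple_fraction z = inverse (tvar - rconst z)"

lemma ratfun_expand_at_simple_fraction: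
  "ratfun_expand (fls_at w) (simple_fraction z) = inverse (fls_const (w - z) + fls_X)"
proof -
  have "fls_at w - fls_const z = fls_const (w - z) + fls_X"
    by (simp add: fls_at_def fls_minus_const[symmetric] algebra_simps)
  then show ?thesis
    by (simp add: simple_fraction_def ratfun_expand_inverse[OF fls_transcendental_at]
        ratfun_expand_diff[OF fls_transcendental_at] ratfun_expand_tvar[OF fls_transcendental_at]
        ratfun_expand_rconst[OF fls_transcendental_at])
qed

lemma ratfun_expand_at_simple_fraction_same: "ratfun_expand (fls_at z) (simple_fraction z) = fls_X_inv"
proof -
  have "fls_X * fls_X_inv = (1 :: complex fls)"
    by (simp add: fls_X_times_conv_shift fls_X_inv_conv_shift_1)
  then show ?thesis by (simp add: ratfun_expand_at_simple_fraction inverse_unique)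
qed

lemma ratfun_expand_at_simple_fraction_other:
  assumes "w \<noteq> z" "k < 0"
  shows "ratfun_expand (fls_at w) (simple_fraction z) $$ k = 0"
proof -
  have "fls_subdegree (fls_const (w - z) + (fls_X :: complex fls)) = 0"
    using assms(1) by (intro fls_subdegree_eqI) simp_all
  then show ?thesis using assms(2) by (simp add: ratfun_expand_at_simple_fraction)
qed

lemma ratfun_expand_inf_simple_fraction: "ratfun_expand fls_X_inv (simple_fraction z) $$ 1 = 1"
proof -
  let ?u = "fls_X_inv - fls_const z :: complex fls"
  have "fls_subdegree ?u = -1" by (rule fls_subdegree_eqI) simp_all
  moreover then have "?u \<noteq> 0" by auto
  ultimately have "inverse ?u $$ 1 = 1" using fls_inverse_base[of ?u] by simp
  then show ?thesis
    by (simp add: simple_fraction_def ratfun_expand_inverse[OF fls_transcendental_X_inv]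
        ratfun_expand_diff[OF fls_transcendental_X_inv] ratfun_expand_tvar[OF fls_transcendental_X_inv]
        ratfun_expand_rconst[OF fls_transcendental_X_inv])
qed

lemma ratfun_expand_inf_polynomial_nth_1:
  assumes "snd (quot_of_fract f) = 1"
  shows "ratfun_expand fls_X_inv f $$ 1 = 0"
proof -
  have "f = Fract (fst (quot_of_fract f)) 1" using Fract_quot_of_fract[of f] assms by simp
  then show ?thesis by (metis ratfun_expand_inf_polynomial fls_poly_inf_nth not_one_le_zero)
qed

text \<open>Residue theorem for at most simple poles: the remainder after subtracting the principal parts
  \<open>c\<^sub>z / (t - z)\<close> is a polynomial, whose coefficient of \<open>1/t\<close> at infinity vanishes.\<close>

lemma coeff_inf_eq_sum_residues:
  assumes simple: "\<And>z k. k < -1 \<Longrightarrow> ratfun_expand (fls_at z) f $$ k = 0"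
  shows "ratfun_expand fls_X_inv f $$ 1
    = (\<Sum>z\<in>{z. poly (snd (quot_of_fract f)) z = 0}. ratfun_expand (fls_at z) f $$ (-1))"
proof -
  define Z where "Z = {z. poly (snd (quot_of_fract f)) z = 0}"
  have fin: "finite Z" using poly_roots_finite[OF snd_quot_of_fract_nonzero] by (simp add: Z_def)
  define c where "c z = ratfun_expand (fls_at z) f $$ (-1)" for z
  define G where "G = f - (\<Sum>z\<in>Z. rconst (c z) * simple_fraction z)"
  have expand_G: "ratfun_expand x G
      = ratfun_expand x f - (\<Sum>z\<in>Z. fls_const (c z) * ratfun_expand x (simple_fraction z))"
    if "fls_transcendental x" for x
    using that by (simp add: G_def ratfun_expand_diff ratfun_expand_sum ratfun_expand_mult ratfun_expand_rconst)
  have "ratfun_expand (fls_at w) G $$ k = 0" if k: "k < 0" for w k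
  proof -
    have other: "(\<Sum>z\<in>Z - {w}. c z * ratfun_expand (fls_at w) (simple_fraction z) $$ k) = 0"
      using ratfun_expand_at_simple_fraction_other k by (intro sum.neutral) auto
    show ?thesis
    proof (cases "w \<in> Z")
      case True
      then have "(\<Sum>z\<in>Z. c z * ratfun_expand (fls_at w) (simple_fraction z) $$ k)
          = (if k = -1 then c w else 0)"
        using fin other by (simp add: sum.remove ratfun_expand_at_simple_fraction_same)
      then show ?thesis
        using simple[of k w] k by (simp add: expand_G[OF fls_transcendental_at] fls_nth_sum c_def)
    next
      case False
      then show ?thesis
        using other ratfun_expand_at_regular[of f w k] k
        by (simp add: expand_G[OF fls_transcendental_at] fls_nth_sum Z_def)
    qed
  qed
  then have "ratfun_expand fls_X_inv G $$ 1 = 0"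
    by (intro ratfun_expand_inf_polynomial_nth_1 regular_everywhere_imp_polynomial)
  then show ?thesis
    by (simp add: expand_G[OF fls_transcendental_X_inv] fls_nth_sum ratfun_expand_inf_simple_fraction
        Z_def c_def)
qed

lemma fls_times_nth_below:
  fixes f g :: "complex fls"
  assumes "\<forall>k<a. f $$ k = 0" "\<forall>k<b. g $$ k = 0" "n < a + b"
  shows "(f * g) $$ n = 0"
proof (cases "f = 0 \<or> g = 0")
  case False
  then have "a \<le> fls_subdegree f" "b \<le> fls_subdegree g"
    using assms(1,2) by (auto intro: fls_subdegree_geI)
  then show ?thesis using assms(3) fls_times_nth_eq0[of n f g] by simp
qed auto

lemma fls_times_nth_at_bounds:
  fixes f g :: "complex fls"
  assumes "\<forall>k<a. f $$ k = 0" "\<forall>k<b. g $$ k = 0"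
  shows "(f * g) $$ (a + b) = f $$ a * g $$ b"
proof (cases "f = 0 \<or> g = 0")
  case False
  then have sf: "a \<le> fls_subdegree f" and sg: "b \<le> fls_subdegree g"
    using assms by (auto intro: fls_subdegree_geI)
  show ?thesis
  proof (cases "a = fls_subdegree f \<and> b = fls_subdegree g")
    case True then show ?thesis using fls_times_base[of f g] by simp
  next
    case False
    then have "a < fls_subdegree f \<or> b < fls_subdegree g" using sf sg by auto
    then show ?thesis using sf sg fls_times_nth_eq0[of "a + b" f g] by auto
  qed
qed auto

text \<open>Comparing the coefficients of \<open>X\<^sup>2\<^sup>d\<close> in \<open>F' = F X + \<alpha>\<close>: a pole of \<open>F\<close> of order \<open>-d\<close> forces
  a simple pole of \<open>X\<close> with residue \<open>d\<close>, which is seen in degree \<open>d\<close> only when \<open>d = -1\<close>.\<close>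

lemma lowest_coeff_of_log_deriv:
  fixes F X :: "complex fls"
  assumes lowF: "\<forall>k<d. F $$ k = 0" and lowX: "\<forall>k<d. X $$ k = 0" and d: "d < 0"
    and eq: "fls_deriv F = F * X + fls_const \<alpha>" and nz: "F $$ d \<noteq> 0"
  shows "X $$ d = (if d = -1 then -1 else 0)"
proof -
  have "of_int (d + d + 1) * F $$ (d + d + 1) = (F * X) $$ (d + d)"
    using arg_cong[OF eq, of "\<lambda>G. G $$ (d + d)"] d by simp
  also have "\<dots> = F $$ d * X $$ d" by (rule fls_times_nth_at_bounds[OF lowF lowX])
  finally have *: "of_int (d + d + 1) * F $$ (d + d + 1) = F $$ d * X $$ d" .
  show ?thesis
  proof (cases "d = -1")
    case False
    then show ?thesis using * lowF d nz by simp
  next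
    case True
    then have "F $$ d * X $$ d = F $$ d * (-1)" using * by simp
    then show ?thesis using True nz by (metis mult_left_cancel)
  qed
qed

text \<open>The lowest coefficients of \<open>A\<^sub>4\<close> at a pole: the alternating sums of the others vanish,
  resp. equal \<open>-1\<close> at a simple pole. Real and imaginary parts are separated so that the
  finite case distinction can be decided by linear arithmetic.\<close>

lemma A4_residue_values_real:
  fixes a b c d e a' b' c' d' e' :: real
  assumes "(d \<noteq> 0 \<or> d' \<noteq> 0) \<longrightarrow> (e - a + b - c = -1 \<and> e' - a' + b' - c' = 0)"
    "(e \<noteq> 0 \<or> e' \<noteq> 0) \<longrightarrow> (a - b + c - d = -1 \<and> a' - b' + c' - d' = 0)"
    "(a \<noteq> 0 \<or> a' \<noteq> 0) \<longrightarrow> (b - c + d - e = -1 \<and> b' - c' + d' - e' = 0)"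
    "(b \<noteq> 0 \<or> b' \<noteq> 0) \<longrightarrow> (c - d + e - a = -1 \<and> c' - d' + e' - a' = 0)"
    "(c \<noteq> 0 \<or> c' \<noteq> 0) \<longrightarrow> (d - e + a - b = -1 \<and> d' - e' + a' - b' = 0)"
    "d + e + a + b + c = 0" "d' + e' + a' + b' + c' = 0"
  shows "a' = 0 \<and> (a = 0 \<or> a = 1 \<or> a = -1 \<or> a = 3 \<or> a = -3)"
  using assms by smt

lemma A4_lowest_coeffs_vanish_real:
  fixes a b c d e a' b' c' d' e' :: real
  assumes "(a \<noteq> 0 \<or> a' \<noteq> 0) \<longrightarrow> (b - c + d - e = 0 \<and> b' - c' + d' - e' = 0)"
    "(b \<noteq> 0 \<or> b' \<noteq> 0) \<longrightarrow> (c - d + e - a = 0 \<and> c' - d' + e' - a' = 0)"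
    "(c \<noteq> 0 \<or> c' \<noteq> 0) \<longrightarrow> (d - e + a - b = 0 \<and> d' - e' + a' - b' = 0)"
    "(d \<noteq> 0 \<or> d' \<noteq> 0) \<longrightarrow> (e - a + b - c = 0 \<and> e' - a' + b' - c' = 0)"
    "(e \<noteq> 0 \<or> e' \<noteq> 0) \<longrightarrow> (a - b + c - d = 0 \<and> a' - b' + c' - d' = 0)"
    "a + b + c + d + e = 0" "a' + b' + c' + d' + e' = 0"
  shows "a = 0 \<and> a' = 0 \<and> b = 0 \<and> b' = 0 \<and> c = 0 \<and> c' = 0 \<and> d = 0 \<and> d' = 0 \<and> e = 0 \<and> e' = 0"
  using assms by smt

lemma A4_residue_int:
  fixes r0 r1 r2 r3 r4 :: complex
  assumes "r0 \<noteq> 0 \<longrightarrow> r1 - r2 + r3 - r4 = -1"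
    "r1 \<noteq> 0 \<longrightarrow> r2 - r3 + r4 - r0 = -1"
    "r2 \<noteq> 0 \<longrightarrow> r3 - r4 + r0 - r1 = -1"
    "r3 \<noteq> 0 \<longrightarrow> r4 - r0 + r1 - r2 = -1"
    "r4 \<noteq> 0 \<longrightarrow> r0 - r1 + r2 - r3 = -1"
    "r0 + r1 + r2 + r3 + r4 = 0"
  shows "r0 \<in> \<int>"
proof -
  have "Im r0 = 0 \<and> (Re r0 = 0 \<or> Re r0 = 1 \<or> Re r0 = -1 \<or> Re r0 = 3 \<or> Re r0 = -3)"
    by (rule A4_residue_values_real[where a="Re r0" and b="Re r1" and c="Re r2" and d="Re r3"
        and e="Re r4" and a'="Im r0" and b'="Im r1" and c'="Im r2" and d'="Im r3" and e'="Im r4"])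
       (use assms(1-5) arg_cong[OF assms(6), of Re] arg_cong[OF assms(6), of Im] in
         \<open>simp_all add: complex_eq_iff\<close>)
  then have "r0 \<in> {0, 1, -1, 3, -3}" by (auto simp: complex_eq_iff)
  then show ?thesis by (auto intro: Ints_minus)
qed

lemma A4_lowest_coeffs_vanish:
  fixes r0 r1 r2 r3 r4 :: complex
  assumes "r0 \<noteq> 0 \<longrightarrow> r1 - r2 + r3 - r4 = 0"
    "r1 \<noteq> 0 \<longrightarrow> r2 - r3 + r4 - r0 = 0"
    "r2 \<noteq> 0 \<longrightarrow> r3 - r4 + r0 - r1 = 0"
    "r3 \<noteq> 0 \<longrightarrow> r4 - r0 + r1 - r2 = 0"
    "r4 \<noteq> 0 \<longrightarrow> r0 - r1 + r2 - r3 = 0"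
    "r0 + r1 + r2 + r3 + r4 = 0"
  shows "r0 = 0 \<and> r1 = 0 \<and> r2 = 0 \<and> r3 = 0 \<and> r4 = 0"
proof -
  have "Re r0 = 0 \<and> Im r0 = 0 \<and> Re r1 = 0 \<and> Im r1 = 0 \<and> Re r2 = 0 \<and> Im r2 = 0 \<and>
      Re r3 = 0 \<and> Im r3 = 0 \<and> Re r4 = 0 \<and> Im r4 = 0"
    by (rule A4_lowest_coeffs_vanish_real)
       (use assms(1-5) arg_cong[OF assms(6), of Re] arg_cong[OF assms(6), of Im] in
         \<open>simp_all add: complex_eq_iff\<close>)
  then show ?thesis by (simp add: complex_eq_iff)
qed

definition A4_system ::
    "('a::comm_ring_1 \<Rightarrow> 'a) \<Rightarrow> (complex \<Rightarrow> 'a) \<Rightarrow> (nat \<Rightarrow> complex) \<Rightarrow> (nat \<Rightarrow> 'a) \<Rightarrow> 'a \<Rightarrow> bool" where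
  "A4_system D c \<alpha> F s \<longleftrightarrow>
     (\<forall>j<5. D (F j) =
        F j * (F ((j+1) mod 5) - F ((j+2) mod 5) + F ((j+3) mod 5) - F ((j+4) mod 5)) + c (\<alpha> j))
     \<and> (\<Sum>j<5. F j) = s"

lemma A4_rational_solution_iff_system: "A4_rational_solution \<alpha> f \<longleftrightarrow> A4_system rderiv rconst \<alpha> f tvar"
  by (simp add: A4_rational_solution_def A4_system_def)

lemma A4_system_explicit:
  "A4_system D c \<alpha> F s \<longleftrightarrow>
     D (F 0) = F 0 * (F 1 - F 2 + F 3 - F 4) + c (\<alpha> 0) \<and>
     D (F 1) = F 1 * (F 2 - F 3 + F 4 - F 0) + c (\<alpha> 1) \<and>
     D (F 2) = F 2 * (F 3 - F 4 + F 0 - F 1) + c (\<alpha> 2) \<and>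
     D (F 3) = F 3 * (F 4 - F 0 + F 1 - F 2) + c (\<alpha> 3) \<and>
     D (F 4) = F 4 * (F 0 - F 1 + F 2 - F 3) + c (\<alpha> 4) \<and>
     F 0 + F 1 + F 2 + F 3 + F 4 = s"
proof -
  have all5: "(\<forall>j<5. P j) \<longleftrightarrow> P 0 \<and> P 1 \<and> P 2 \<and> P 3 \<and> P 4" for P :: "nat \<Rightarrow> bool"
  proof
    assume "P 0 \<and> P 1 \<and> P 2 \<and> P 3 \<and> P 4"
    moreover have "j < 5 \<Longrightarrow> j = 0 \<or> j = 1 \<or> j = 2 \<or> j = 3 \<or> j = 4" for j :: nat by arith
    ultimately show "\<forall>j<5. P j" by blast
  qed simp
  have "{..<5::nat} = {0, 1, 2, 3, 4}" by auto
  then have "(\<Sum>j<5. F j) = F 0 + F 1 + F 2 + F 3 + F 4" by (simp add: add.assoc)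
  then show ?thesis by (simp add: A4_system_def all5 numeral_2_eq_2)
qed

lemma A4_system_eqs:
  assumes "A4_system D c \<alpha> F s"
  shows "D (F 0) = F 0 * (F 1 - F 2 + F 3 - F 4) + c (\<alpha> 0)"
    and "D (F 1) = F 1 * (F 2 - F 3 + F 4 - F 0) + c (\<alpha> 1)"
    and "D (F 2) = F 2 * (F 3 - F 4 + F 0 - F 1) + c (\<alpha> 2)"
    and "D (F 3) = F 3 * (F 4 - F 0 + F 1 - F 2) + c (\<alpha> 3)"
    and "D (F 4) = F 4 * (F 0 - F 1 + F 2 - F 3) + c (\<alpha> 4)"
    and "F 0 + F 1 + F 2 + F 3 + F 4 = s"
  using assms by (simp_all add: A4_system_explicit)

lemma A4_system_rotate:
  assumes "A4_system D c \<alpha> F s" "i < 5"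
  shows "A4_system D c (\<lambda>j. \<alpha> ((i + j) mod 5)) (\<lambda>j. F ((i + j) mod 5)) s"
proof -
  note eqs = assms(1)[unfolded A4_system_explicit]
  have sums: "F 1 + F 2 + F 3 + F 4 + F 0 = s" "F 2 + F 3 + F 4 + F 0 + F 1 = s"
    "F 3 + F 4 + F 0 + F 1 + F 2 = s" "F 4 + F 0 + F 1 + F 2 + F 3 = s"
    using eqs by (simp_all add: algebra_simps)
  have "i = 0 \<or> i = 1 \<or> i = 2 \<or> i = 3 \<or> i = 4" using assms(2) by arith
  then show ?thesis
    using eqs sums by (elim disjE) (simp_all add: A4_system_explicit numeral_2_eq_2)
qed

lemma A4_system_hom:
  assumes "A4_system D c \<alpha> F s"
    and add: "\<And>a b. h (a + b) = h a + h b" and mult: "\<And>a b. h (a * b) = h a * h b"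
    and const: "\<And>a. h (c a) = c' a" and deriv: "\<And>a. h (D a) = D' (h a)"
  shows "A4_system D' c' \<alpha> (\<lambda>j. h (F j)) (h s)"
proof -
  have diff: "h (a - b) = h a - h b" for a b using add[of "a - b" b] by simp
  show ?thesis using assms(1) by (auto simp: A4_system_explicit add mult diff const simp flip: deriv)
qed

lemma A4_system_expand:
  assumes "A4_rational_solution \<alpha> f" "fls_transcendental x"
    and deriv: "\<And>g. ratfun_expand x (rderiv g) = D (ratfun_expand x g)"
  shows "A4_system D fls_const \<alpha> (\<lambda>j. ratfun_expand x (f j)) x"
  using A4_system_hom[of rderiv rconst \<alpha> f tvar "ratfun_expand x"] assms
  by (simp add: A4_rational_solution_iff_system ratfun_expand_add ratfun_expand_mult
      ratfun_expand_rconst ratfun_expand_tvar)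

section \<open>Simple poles at finite points\<close>

definition simple_pole_int_residue :: "complex fls \<Rightarrow> bool" where
  "simple_pole_int_residue F \<longleftrightarrow> (\<forall>k < -1. F $$ k = 0) \<and> F $$ (-1) \<in> \<int>"

lemma A4_system_lowest_coeffs:
  assumes sys: "A4_system fls_deriv fls_const \<alpha> F s" and s: "\<forall>k<0. s $$ k = 0"
    and d: "d < 0" and low: "\<And>j k. j < 5 \<Longrightarrow> k < d \<Longrightarrow> F j $$ k = 0"
  shows "F 0 $$ d \<noteq> 0 \<longrightarrow> F 1 $$ d - F 2 $$ d + F 3 $$ d - F 4 $$ d = (if d = -1 then -1 else 0)"
    and "F 1 $$ d \<noteq> 0 \<longrightarrow> F 2 $$ d - F 3 $$ d + F 4 $$ d - F 0 $$ d = (if d = -1 then -1 else 0)"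
    and "F 2 $$ d \<noteq> 0 \<longrightarrow> F 3 $$ d - F 4 $$ d + F 0 $$ d - F 1 $$ d = (if d = -1 then -1 else 0)"
    and "F 3 $$ d \<noteq> 0 \<longrightarrow> F 4 $$ d - F 0 $$ d + F 1 $$ d - F 2 $$ d = (if d = -1 then -1 else 0)"
    and "F 4 $$ d \<noteq> 0 \<longrightarrow> F 0 $$ d - F 1 $$ d + F 2 $$ d - F 3 $$ d = (if d = -1 then -1 else 0)"
    and "F 0 $$ d + F 1 $$ d + F 2 $$ d + F 3 $$ d + F 4 $$ d = 0"
proof -
  note eqs = A4_system_eqs[OF sys]
  have rel: "G $$ d \<noteq> 0 \<longrightarrow> X $$ d = (if d = -1 then -1 else 0)"
    if "\<forall>k<d. G $$ k = 0" "\<forall>k<d. X $$ k = 0" "fls_deriv G = G * X + fls_const a"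
    for G X :: "complex fls" and a
    using lowest_coeff_of_log_deriv[OF that(1,2) d that(3)] by blast
  show "F 0 $$ d \<noteq> 0 \<longrightarrow> F 1 $$ d - F 2 $$ d + F 3 $$ d - F 4 $$ d = (if d = -1 then -1 else 0)"
    using rel[OF _ _ eqs(1)] low by simp
  show "F 1 $$ d \<noteq> 0 \<longrightarrow> F 2 $$ d - F 3 $$ d + F 4 $$ d - F 0 $$ d = (if d = -1 then -1 else 0)"
    using rel[OF _ _ eqs(2)] low by simp
  show "F 2 $$ d \<noteq> 0 \<longrightarrow> F 3 $$ d - F 4 $$ d + F 0 $$ d - F 1 $$ d = (if d = -1 then -1 else 0)"
    using rel[OF _ _ eqs(3)] low by simp
  show "F 3 $$ d \<noteq> 0 \<longrightarrow> F 4 $$ d - F 0 $$ d + F 1 $$ d - F 2 $$ d = (if d = -1 then -1 else 0)"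
    using rel[OF _ _ eqs(4)] low by simp
  show "F 4 $$ d \<noteq> 0 \<longrightarrow> F 0 $$ d - F 1 $$ d + F 2 $$ d - F 3 $$ d = (if d = -1 then -1 else 0)"
    using rel[OF _ _ eqs(5)] low by simp
  show "F 0 $$ d + F 1 $$ d + F 2 $$ d + F 3 $$ d + F 4 $$ d = 0"
    using s d eqs(6) by auto
qed

lemma A4_system_simple_pole_0:
  assumes sys: "A4_system fls_deriv fls_const \<alpha> F s" and s: "\<forall>k<0. s $$ k = 0"
  shows "simple_pole_int_residue (F 0)"
proof -
  define d where "d = min 0 (Min ((\<lambda>j. fls_subdegree (F j)) ` {..<5}))"
  have low: "F j $$ k = 0" if "j < 5" "k < d" for j k
  proof -
    have "d \<le> fls_subdegree (F j)"
      unfolding d_def using that(1) by (intro min.coboundedI2 Min_le) auto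
    then show ?thesis using that(2) by (cases "F j = 0") auto
  qed
  show ?thesis
  proof (cases "d = 0")
    case True
    then show ?thesis using low[of 0] by (simp add: simple_pole_int_residue_def)
  next
    case False
    then have d: "d < 0" by (simp add: d_def)
    have "Min ((\<lambda>j. fls_subdegree (F j)) ` {..<5}) \<in> (\<lambda>j. fls_subdegree (F j)) ` {..<5}"
      by (intro Min_in) (auto simp: lessThan_empty_iff)
    then obtain j where j: "j < 5" "d = fls_subdegree (F j)"
      using d by (auto simp: d_def min_def split: if_splits)
    then have Fj: "F j $$ d \<noteq> 0" using d by (cases "F j = 0") auto
    note rel = A4_system_lowest_coeffs[OF sys s d low]
    have "d = -1"
    proof (rule ccontr)
      assume "d \<noteq> -1"
      then have "F 0 $$ d = 0 \<and> F 1 $$ d = 0 \<and> F 2 $$ d = 0 \<and> F 3 $$ d = 0 \<and> F 4 $$ d = 0"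
        using rel by (intro A4_lowest_coeffs_vanish) simp_all
      moreover have "j = 0 \<or> j = 1 \<or> j = 2 \<or> j = 3 \<or> j = 4" using j(1) by arith
      ultimately show False using Fj by auto
    qed
    then have "F 0 $$ (-1) \<in> \<int>" using rel by (intro A4_residue_int) simp_all
    then show ?thesis using low[of 0] \<open>d = -1\<close> by (simp add: simple_pole_int_residue_def)
  qed
qed

lemma A4_system_simple_poles:
  assumes "A4_system fls_deriv fls_const \<alpha> F s" "\<forall>k<0. s $$ k = 0" "j < 5"
  shows "simple_pole_int_residue (F j)"
  using A4_system_simple_pole_0[OF A4_system_rotate[OF assms(1,3)] assms(2)] assms(3) by simp

section \<open>Coefficients at infinity\<close>

lemma pole_at_inf_factor_vanishes:
  fixes p X :: "complex fls"
  assumes pole: "\<exists>k<0. p $$ k \<noteq> 0" and eq: "fls_deriv_inf p = p * X + fls_const \<alpha>"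
  shows "\<forall>k\<le>0. X $$ k = 0"
proof (rule ccontr)
  assume "\<not> (\<forall>k\<le>0. X $$ k = 0)"
  then obtain k where k: "k \<le> 0" "X $$ k \<noteq> 0" by auto
  have X0: "X \<noteq> 0" using k by auto
  obtain j where j: "j < 0" "p $$ j \<noteq> 0" using pole by auto
  have p0: "p \<noteq> 0" using j by auto
  define d where "d = fls_subdegree p"
  define e where "e = fls_subdegree X"
  have d: "d < 0" using fls_subdegree_leI[OF j(2)] j(1) unfolding d_def by linarith
  have e: "e \<le> 0" using fls_subdegree_leI[OF k(2)] k(1) unfolding e_def by linarith
  have coef: "(fls_deriv_inf p) $$ n = (p * X) $$ n + (fls_const \<alpha>) $$ n" for n
    by (simp only: eq fls_plus_nth)
  have "(fls_deriv_inf p) $$ (d + e) = - of_int (d + e - 1) * p $$ (d + e - 1)" by (simp only: fls_deriv_inf_nth)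
  moreover have "p $$ (d + e - 1) = 0" using e unfolding d_def by simp
  moreover have "(p * X) $$ (d + e) = p $$ d * X $$ e"
    using fls_times_base[of p X] unfolding d_def e_def by simp
  moreover have "(fls_const \<alpha>) $$ (d + e) = 0" using d e by simp
  ultimately have "p $$ d * X $$ e = 0" using coef[of "d+e"] by simp
  moreover have "p $$ d \<noteq> 0" "X $$ e \<noteq> 0" using p0 X0 unfolding d_def e_def by simp_all
  ultimately show False by simp
qed

lemma regular_at_inf_factor_coeffs:
  fixes g Y :: "complex fls"
  assumes reg: "\<forall>k<0. g $$ k = 0" and eq: "fls_deriv_inf g = g * Y + fls_const \<alpha>"
    and Y: "\<forall>k < -1. Y $$ k = 0" "Y $$ (-1) = y" "y \<noteq> 0"
  shows "g $$ 0 = 0 \<and> y * g $$ 1 + \<alpha> = 0 \<and> (\<alpha> = 0 \<longrightarrow> g = 0)"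
proof (cases "g = 0")
  case True
  then have "fls_const \<alpha> = (0 :: complex fls)" using eq by (simp add: fls_deriv_inf_def)
  then have "\<alpha> = 0" by (metis fls_const_0 fls_const_nonzero)
  then show ?thesis using True by simp
next
  case False
  define e where "e = fls_subdegree g"
  have e0: "0 \<le> e" unfolding e_def using reg False by (intro fls_subdegree_geI) auto
  have ge: "g $$ e \<noteq> 0" using False unfolding e_def by simp
  have low: "\<forall>k<e. g $$ k = 0" unfolding e_def by simp
  have coef: "(fls_deriv_inf g) $$ n = (g * Y) $$ n + (fls_const \<alpha>) $$ n" for n
    by (simp only: eq fls_plus_nth)
  have "(fls_deriv_inf g) $$ (e - 1) = - of_int (e - 1 - 1) * g $$ (e - 1 - 1)" by (simp only: fls_deriv_inf_nth)
  moreover have "g $$ (e - 1 - 1) = 0" using low by simp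
  moreover have "(g * Y) $$ (e + -1) = g $$ e * y"
    using fls_times_nth_at_bounds[OF low Y(1)] Y(2) by simp
  ultimately have E: "0 = g $$ e * y + (if e - 1 = 0 then \<alpha> else 0)"
    using coef[of "e - 1"] by simp
  have "e = 1"
  proof (rule ccontr)
    assume "e \<noteq> 1"
    then have "g $$ e * y = 0" using E by simp
    then show False using ge Y(3) by simp
  qed
  then have "0 = g $$ 1 * y + \<alpha>" using E by simp
  moreover have "g $$ 0 = 0" using low \<open>e = 1\<close> by simp
  moreover have "\<alpha> \<noteq> 0" using \<open>0 = g $$ 1 * y + \<alpha>\<close> ge \<open>e = 1\<close> Y(3) by auto
  ultimately show ?thesis by (simp add: algebra_simps)
qed

lemma coeff_0_of_pole_at_inf_equation:
  fixes p Y :: "complex fls"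
  assumes "\<forall>k < -1. p $$ k = 0" "\<forall>k\<le>0. Y $$ k = 0"
    and "fls_deriv_inf p = p * Y + fls_const \<alpha>"
  shows "p $$ (-1) = p $$ (-1) * Y $$ 1 + \<alpha>"
proof -
  have "(p * Y) $$ (-1 + 1) = p $$ (-1) * Y $$ 1"
    using assms(2) by (intro fls_times_nth_at_bounds[OF assms(1)]) auto
  then show ?thesis
    using arg_cong[OF assms(3), of "\<lambda>G. G $$ 0"] by (simp add: fls_deriv_inf_nth)
qed

lemma next_coeff_of_factor_vanishes:
  fixes p Y :: "complex fls" and n :: nat
  assumes low_p: "\<forall>k < -1. p $$ k = 0" and res: "p $$ (-1) = r" "r \<noteq> 0"
    and low_Y: "\<forall>k < int n. Y $$ k = 0" and zero: "\<forall>m < n. p $$ int m = 0"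
    and eq: "fls_deriv_inf p = p * Y + fls_const r"
  shows "Y $$ int n = 0"
proof -
  have "fls_deriv_inf p $$ (int n - 1) = (if n = 1 then r else 0)"
  proof -
    have "p $$ (int n - 2) = 0" if "n \<noteq> 1"
      using that low_p zero[rule_format, of "n - 2"] by (cases "n = 0") (simp_all add: of_nat_diff)
    then show ?thesis using res by (auto simp: fls_deriv_inf_nth)
  qed
  moreover have "(p * Y) $$ (-1 + int n) = r * Y $$ int n"
    using fls_times_nth_at_bounds[OF low_p low_Y] res by simp
  ultimately have "(if n = 1 then r else 0) = r * Y $$ int n + (if n = 1 then r else 0)"
    using arg_cong[OF eq, of "\<lambda>G. G $$ (int n - 1)"] by (simp add: add.commute)
  then show ?thesis using res(2) by simp
qed

text \<open>Two adjacent poles with principal parts fixed by \<open>a + b + u = 1/t\<close> determine all coefficients: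
  the coefficient of \<open>t\<^sup>-\<^sup>n\<close> in the equations of \<open>a\<close> and \<open>b\<close> is linear in the \<open>n\<close>-th coefficients.\<close>

lemma two_poles_at_inf_unique:
  fixes a b u :: "complex fls"
  assumes sum: "a + b + u = fls_X_inv"
    and eq_a: "fls_deriv_inf a = a * (b - u) + fls_const (1/3)"
    and eq_b: "fls_deriv_inf b = b * (u - a) + fls_const (1/3)"
    and pole_a: "\<exists>k<0. a $$ k \<noteq> 0" and pole_b: "\<exists>k<0. b $$ k \<noteq> 0"
  shows "a = fls_const (1/3) * fls_X_inv \<and> b = fls_const (1/3) * fls_X_inv
    \<and> u = fls_const (1/3) * fls_X_inv"
proof -
  have Ya: "\<forall>k\<le>0. (b - u) $$ k = 0" by (rule pole_at_inf_factor_vanishes[OF pole_a eq_a])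
  have Yb: "\<forall>k\<le>0. (u - a) $$ k = 0" by (rule pole_at_inf_factor_vanishes[OF pole_b eq_b])
  have sum_k: "a $$ k + b $$ k + u $$ k = (if k = -1 then 1 else 0)" for k
    using arg_cong[OF sum, of "\<lambda>G. G $$ k"] by simp
  have nonpos: "a $$ k = (if k = -1 then 1/3 else 0) \<and> b $$ k = a $$ k \<and> u $$ k = a $$ k"
    if "k \<le> 0" for k
    using Ya Yb sum_k[of k] that by (auto simp: field_simps)
  have low_a: "\<forall>k < -1. a $$ k = 0" and low_b: "\<forall>k < -1. b $$ k = 0"
    using nonpos by auto
  have pos: "a $$ int n = 0 \<and> b $$ int n = 0 \<and> u $$ int n = 0" for n
  proof (induction n rule: less_induct)
    case (less n)
    have low: "(b - u) $$ k = 0 \<and> (u - a) $$ k = 0" if "k < int n" for k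
    proof (cases "k \<le> 0")
      case False
      then show ?thesis using less[of "nat k"] that by simp
    qed (use Ya Yb in auto)
    have "(b - u) $$ int n = 0"
      using next_coeff_of_factor_vanishes[OF low_a _ _ _ _ eq_a] nonpos[of "-1"] low less by simp
    moreover have "(u - a) $$ int n = 0"
      using next_coeff_of_factor_vanishes[OF low_b _ _ _ _ eq_b] nonpos[of "-1"] low less by simp
    ultimately show ?case using sum_k[of "int n"] by (simp add: field_simps)
  qed
  have "a $$ k = (if k = -1 then 1/3 else 0) \<and> b $$ k = a $$ k \<and> u $$ k = a $$ k" for k
    using nonpos[of k] pos[of "nat k"] by (cases "k \<le> 0") simp_all
  then show ?thesis by (simp add: fls_eq_iff)
qed

locale A4_type_B_at_inf =
  fixes F :: "nat \<Rightarrow> complex fls" and \<alpha> :: "nat \<Rightarrow> complex"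
  assumes system: "A4_system fls_deriv_inf fls_const \<alpha> F fls_X_inv"
    and poles: "\<And>j. j < 3 \<Longrightarrow> \<exists>k<0. F j $$ k \<noteq> 0"
    and regular: "\<And>k. k < 0 \<Longrightarrow> F 3 $$ k = 0" "\<And>k. k < 0 \<Longrightarrow> F 4 $$ k = 0"
    and alpha_sum: "\<alpha> 0 + \<alpha> 1 + \<alpha> 2 + \<alpha> 3 + \<alpha> 4 = 1"
      \<comment> \<open>holds for every solution, by summing the equations\<close>
begin

lemmas eq0 = A4_system_eqs(1)[OF system] and eq1 = A4_system_eqs(2)[OF system]
  and eq2 = A4_system_eqs(3)[OF system] and eq3 = A4_system_eqs(4)[OF system]
  and eq4 = A4_system_eqs(5)[OF system] and sum = A4_system_eqs(6)[OF system]

lemma sum_nth: "F 0 $$ k + F 1 $$ k + F 2 $$ k + F 3 $$ k + F 4 $$ k = (if k = -1 then 1 else 0)"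
  using arg_cong[OF sum, of "\<lambda>G. G $$ k"] by simp

lemma factors_vanish:
  shows "\<forall>k\<le>0. (F 1 - F 2 + F 3 - F 4) $$ k = 0"
    and "\<forall>k\<le>0. (F 2 - F 3 + F 4 - F 0) $$ k = 0"
    and "\<forall>k\<le>0. (F 3 - F 4 + F 0 - F 1) $$ k = 0"
  by (rule pole_at_inf_factor_vanishes[OF poles eq0], simp)
     (rule pole_at_inf_factor_vanishes[OF poles eq1], simp,
      rule pole_at_inf_factor_vanishes[OF poles eq2], simp)

lemma principal_part:
  assumes "j < 3" "k < 0"
  shows "F j $$ k = (if k = -1 then 1/3 else 0)"
proof -
  have F34: "F 3 $$ k = 0" "F 4 $$ k = 0" using regular assms(2) by auto
  have F12: "F 1 $$ k = F 2 $$ k" using factors_vanish(1)[rule_format, of k] F34 assms(2) by simp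
  have F20: "F 2 $$ k = F 0 $$ k" using factors_vanish(2)[rule_format, of k] F34 assms(2) by simp
  have "3 * F 0 $$ k = (if k = -1 then 1 else 0)" using sum_nth[of k] F34 F12 F20 by simp
  then have "F 0 $$ k = (if k = -1 then 1/3 else 0)" by (cases "k = -1") (simp_all add: field_simps)
  moreover have "j = 0 \<or> j = 1 \<or> j = 2" using assms(1) by arith
  ultimately show ?thesis using F12 F20 by auto
qed

lemma F3_coeff_1: "F 3 $$ 1 = 3 * \<alpha> 3 \<and> (\<alpha> 3 = 0 \<longrightarrow> F 3 = 0)"
proof -
  have Y: "(F 4 - F 0 + F 1 - F 2) $$ k = (if k = -1 then - (1/3) else 0)" if "k < 0" for k
    using that regular(2) principal_part[of 0 k] principal_part[of 1 k] principal_part[of 2 k] by simp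
  have "F 3 $$ 0 = 0 \<and> - (1/3) * F 3 $$ 1 + \<alpha> 3 = 0 \<and> (\<alpha> 3 = 0 \<longrightarrow> F 3 = 0)"
    by (rule regular_at_inf_factor_coeffs[OF _ eq3]) (use regular(1) Y in auto)
  then show ?thesis unfolding complex_eq_iff by auto
qed

lemma F4_coeff_1: "F 4 $$ 1 = - 3 * \<alpha> 4 \<and> (\<alpha> 4 = 0 \<longrightarrow> F 4 = 0)"
proof -
  have Y: "(F 0 - F 1 + F 2 - F 3) $$ k = (if k = -1 then 1/3 else 0)" if "k < 0" for k
    using that regular(1) principal_part[of 0 k] principal_part[of 1 k] principal_part[of 2 k] by simp
  have "F 4 $$ 0 = 0 \<and> (1/3) * F 4 $$ 1 + \<alpha> 4 = 0 \<and> (\<alpha> 4 = 0 \<longrightarrow> F 4 = 0)"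
    by (rule regular_at_inf_factor_coeffs[OF _ eq4]) (use regular(2) Y in auto)
  then show ?thesis unfolding complex_eq_iff by auto
qed

lemma F0_coeff_1: "F 0 $$ 1 = \<alpha> 1 - \<alpha> 2 - 3 * \<alpha> 3 - \<alpha> 4"
proof -
  have factor_1: "Y $$ 1 = 1 - 3 * \<alpha> j"
    if "j < 3" "\<forall>k\<le>0. Y $$ k = 0" "fls_deriv_inf (F j) = F j * Y + fls_const (\<alpha> j)" for j Y
  proof -
    have "1/3 = 1/3 * Y $$ 1 + \<alpha> j"
      using coeff_0_of_pole_at_inf_equation[OF _ that(2,3)] principal_part[OF that(1)] by simp
    then show ?thesis unfolding complex_eq_iff by auto
  qed
  have "F 2 $$ 1 - F 3 $$ 1 + F 4 $$ 1 - F 0 $$ 1 = 1 - 3 * \<alpha> 1"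
    using factor_1[OF _ factors_vanish(2) eq1] by simp
  moreover have "F 3 $$ 1 - F 4 $$ 1 + F 0 $$ 1 - F 1 $$ 1 = 1 - 3 * \<alpha> 2"
    using factor_1[OF _ factors_vanish(3) eq2] by simp
  moreover have "F 0 $$ 1 + F 1 $$ 1 + F 2 $$ 1 + F 3 $$ 1 + F 4 $$ 1 = 0" using sum_nth[of 1] by simp
  ultimately show ?thesis
    using F3_coeff_1[THEN conjunct1] F4_coeff_1[THEN conjunct1] unfolding complex_eq_iff by simp
qed

lemma pair_01_unique:
  assumes "\<alpha> 0 = 1/3" "\<alpha> 1 = 1/3" "\<alpha> 3 = 0"
  shows "F 0 = fls_const (1/3) * fls_X_inv \<and> F 1 = fls_const (1/3) * fls_X_inv
    \<and> F 2 + F 4 = fls_const (1/3) * fls_X_inv \<and> F 3 = 0"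
proof -
  have F3: "F 3 = 0" using F3_coeff_1 assms(3) by simp
  have "F 0 + F 1 + (F 2 + F 4) = fls_X_inv" using sum F3 by (simp add: add.assoc)
  moreover have "fls_deriv_inf (F 0) = F 0 * (F 1 - (F 2 + F 4)) + fls_const (1/3)"
    using eq0 F3 unfolding assms(1) by (simp add: algebra_simps)
  moreover have "fls_deriv_inf (F 1) = F 1 * ((F 2 + F 4) - F 0) + fls_const (1/3)"
    using eq1 F3 unfolding assms(2) by (simp add: algebra_simps)
  ultimately have "F 0 = fls_const (1/3) * fls_X_inv \<and> F 1 = fls_const (1/3) * fls_X_inv
      \<and> F 2 + F 4 = fls_const (1/3) * fls_X_inv"
    by (rule two_poles_at_inf_unique[OF _ _ _ poles poles]) simp_all
  with F3 show ?thesis by blast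
qed

lemma pair_12_unique:
  assumes "\<alpha> 1 = 1/3" "\<alpha> 2 = 1/3" "\<alpha> 4 = 0"
  shows "F 1 = fls_const (1/3) * fls_X_inv \<and> F 2 = fls_const (1/3) * fls_X_inv
    \<and> F 3 + F 0 = fls_const (1/3) * fls_X_inv \<and> F 4 = 0"
proof -
  have F4: "F 4 = 0" using F4_coeff_1 assms(3) by simp
  have "F 1 + F 2 + (F 3 + F 0) = fls_X_inv" using sum F4 by (simp add: algebra_simps)
  moreover have "fls_deriv_inf (F 1) = F 1 * (F 2 - (F 3 + F 0)) + fls_const (1/3)"
    using eq1 F4 unfolding assms(1) by (simp add: algebra_simps)
  moreover have "fls_deriv_inf (F 2) = F 2 * ((F 3 + F 0) - F 1) + fls_const (1/3)"
    using eq2 F4 unfolding assms(2) by (simp add: algebra_simps)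
  ultimately have "F 1 = fls_const (1/3) * fls_X_inv \<and> F 2 = fls_const (1/3) * fls_X_inv
      \<and> F 3 + F 0 = fls_const (1/3) * fls_X_inv"
    by (rule two_poles_at_inf_unique[OF _ _ _ poles poles]) simp_all
  with F4 show ?thesis by blast
qed

end

section \<open>Type B solutions\<close>

lemma riccati_simple_pole:
  fixes h Y :: "complex fls" and \<sigma> c :: complex
  assumes eq: "fls_deriv h = h * (fls_const \<sigma> * h + Y) + fls_const c"
    and Y: "\<forall>k<0. Y $$ k = 0" and s: "\<sigma> \<noteq> 0"
  shows "(\<forall>k < -1. h $$ k = 0) \<and> - h $$ (-1) = \<sigma> * h $$ (-1) * h $$ (-1)"
proof -
  have coef: "(fls_deriv h) $$ n = \<sigma> * (h * h) $$ n + (h * Y) $$ n + (fls_const c) $$ n" for n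
    by (simp only: eq distrib_left fls_plus_nth mult.left_commute[of h "fls_const \<sigma>"] fls_mult_const_nth(1))
  have low: "\<forall>k < -1. h $$ k = 0"
  proof (rule ccontr)
    assume "\<not> (\<forall>k < -1. h $$ k = 0)"
    then obtain k where k: "k < -1" "h $$ k \<noteq> 0" by auto
    then have h0: "h \<noteq> 0" by auto
    define d where "d = fls_subdegree h"
    have d: "d < -1" using fls_subdegree_leI[OF k(2)] k(1) unfolding d_def by linarith
    have lowh: "\<forall>k<d. h $$ k = 0" unfolding d_def by simp
    have hd: "h $$ d \<noteq> 0" using h0 unfolding d_def by simp
    have "(fls_deriv h) $$ (d + d) = of_int (d + d + 1) * h $$ (d + d + 1)" by simp
    moreover have "h $$ (d + d + 1) = 0" using lowh d by simp
    moreover have "(h * Y) $$ (d + d) = 0" using fls_times_nth_below[OF lowh Y] d by simp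
    moreover have "(h * h) $$ (d + d) = h $$ d * h $$ d" using fls_times_nth_at_bounds[OF lowh lowh] .
    moreover have "(fls_const c) $$ (d + d) = 0" using d by simp
    ultimately have "\<sigma> * (h $$ d * h $$ d) = 0" using coef[of "d + d"] by simp
    then show False using s hd by simp
  qed
  have "(fls_deriv h) $$ (-2) = - h $$ (-1)" by simp
  moreover have "(h * Y) $$ (-2) = 0" using fls_times_nth_below[OF low Y] by simp
  moreover have "(h * h) $$ (-1 + -1) = h $$ (-1) * h $$ (-1)" using fls_times_nth_at_bounds[OF low low] .
  moreover have "(fls_const c) $$ (-2) = 0" by simp
  ultimately have "- h $$ (-1) = \<sigma> * (h $$ (-1) * h $$ (-1))" using coef[of "-2"] by simp
  then show ?thesis using low by (simp add: mult.assoc)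
qed

lemma riccati_coeff_inf_sign:
  assumes eq: "rderiv h = h * (rconst \<sigma> * h + Fract p 1) + rconst c" and "\<sigma> \<noteq> 0"
  shows "Re (\<sigma> * ratfun_expand fls_X_inv h $$ 1) \<le> 0"
proof -
  have residue: "(\<forall>k < -1. ratfun_expand (fls_at z) h $$ k = 0)
      \<and> Re (\<sigma> * ratfun_expand (fls_at z) h $$ (-1)) \<le> 0" for z
  proof -
    let ?h = "ratfun_expand (fls_at z) h"
    have "fls_deriv ?h = ?h * (fls_const \<sigma> * ?h + fls_poly (fls_at z) p) + fls_const c"
      using arg_cong[OF eq, of "ratfun_expand (fls_at z)"]
      by (simp add: ratfun_expand_at_rderiv ratfun_expand_add[OF fls_transcendental_at]
          ratfun_expand_mult[OF fls_transcendental_at] ratfun_expand_rconst[OF fls_transcendental_at]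
          ratfun_expand_Fract[OF fls_transcendental_at])
    \<comment> \<open>the residue \<open>r\<close> satisfies \<open>-r = \<sigma> r\<^sup>2\<close>, so \<open>\<sigma> r \<in> {0, -1}\<close>\<close>
    from riccati_simple_pole[OF this _ assms(2)]
    have "\<forall>k < -1. ?h $$ k = 0" and res: "- ?h $$ (-1) = \<sigma> * ?h $$ (-1) * ?h $$ (-1)"
      by (simp_all add: fls_poly_at_nth_neg)
    have "?h $$ (-1) * (1 + \<sigma> * ?h $$ (-1)) = ?h $$ (-1) + \<sigma> * ?h $$ (-1) * ?h $$ (-1)"
      by (simp add: algebra_simps)
    also have "\<dots> = 0" by (simp flip: res)
    finally have "\<sigma> * ?h $$ (-1) = 0 \<or> \<sigma> * ?h $$ (-1) = -1" by (auto simp: add_eq_0_iff)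
    then show ?thesis using \<open>\<forall>k < -1. ?h $$ k = 0\<close> by (auto simp del: times_complex.sel)
  qed
  have "\<sigma> * ratfun_expand fls_X_inv h $$ 1
      = (\<Sum>z\<in>{z. poly (snd (quot_of_fract h)) z = 0}. \<sigma> * ratfun_expand (fls_at z) h $$ (-1))"
    using residue by (simp add: coeff_inf_eq_sum_residues sum_distrib_left)
  then show ?thesis using residue by (simp add: Re_sum sum_nonpos)
qed

definition type_B_at :: "nat \<Rightarrow> (nat \<Rightarrow> ratfun) \<Rightarrow> bool" where
  "type_B_at i f \<longleftrightarrow> pole_at_inf (f i) \<and> pole_at_inf (f ((i+1) mod 5)) \<and> pole_at_inf (f ((i+2) mod 5))
      \<and> regular_at_inf (f ((i+3) mod 5)) \<and> regular_at_inf (f ((i+4) mod 5))"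

lemma type_B_iff: "type_B f \<longleftrightarrow> (\<exists>i<5. type_B_at i f)"
  by (simp add: type_B_def type_B_at_def)

lemma type_B_at_rotate:
  assumes "type_B_at i f" "i < 5"
  shows "type_B_at 0 (\<lambda>j. f ((i + j) mod 5))"
  using assms by (simp add: type_B_at_def)

lemma A4_type_B_at_inf_expand:
  assumes "A4_rational_solution \<alpha> f" "type_B_at 0 f" "\<alpha> 0 + \<alpha> 1 + \<alpha> 2 + \<alpha> 3 + \<alpha> 4 = 1"
  shows "A4_type_B_at_inf (\<lambda>j. ratfun_expand fls_X_inv (f j)) \<alpha>"
proof
  show "A4_system fls_deriv_inf fls_const \<alpha> (\<lambda>j. ratfun_expand fls_X_inv (f j)) fls_X_inv"
    by (rule A4_system_expand[OF assms(1) fls_transcendental_X_inv ratfun_expand_inf_rderiv])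
  show "\<exists>k<0. ratfun_expand fls_X_inv (f j) $$ k \<noteq> 0" if "j < 3" for j
  proof -
    have "j = 0 \<or> j = 1 \<or> j = 2" using that by arith
    then show ?thesis using assms(2) by (auto simp: type_B_at_def pole_at_inf_iff numeral_2_eq_2)
  qed
qed (use assms(2,3) in \<open>simp_all add: type_B_at_def regular_at_inf_iff\<close>)

lemma rconst_0: "rconst 0 = 0"
  by (simp add: rconst_def Zero_fract_def)

lemma rconst_1: "rconst 1 = 1"
  by (metis rconst_def One_fract_def pCons_one)

lemma rconst_add: "rconst (a + b) = rconst a + rconst b"
  by (simp add: rconst_def)

lemma rconst_uminus: "rconst (- c) = - rconst c"
  by (simp add: rconst_def)

lemma rderiv_0: "rderiv 0 = 0"
  by (simp add: rderiv_def) (simp add: Zero_fract_def)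

lemma third_t_eq_Fract: "rconst (1/3) * tvar = Fract [:0, 1/3:] 1"
  by (simp add: rconst_def tvar_def mult_fract)

lemma ratfun_expand_inf_third_t:
  "ratfun_expand fls_X_inv (rconst (1/3) * tvar) = fls_const (1/3) * fls_X_inv"
  by (simp add: ratfun_expand_mult ratfun_expand_rconst ratfun_expand_tvar fls_transcendental_X_inv)

lemma rderiv_third_t: "rderiv (rconst (1/3) * tvar) = rconst (1/3)"
proof -
  have "fls_deriv_inf (fls_const (1/3) * fls_X_inv) = fls_const (1/3)"
    by (simp add: fls_deriv_inf_mult fls_deriv_inf_X_inv)
  then show ?thesis
    by (simp add: ratfun_expand_inf_rderiv ratfun_expand_inf_third_t fls_transcendental_X_inv
        ratfun_expand_rconst flip: ratfun_expand_inj[OF fls_transcendental_X_inv])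
qed

lemma eq_third_t_iff_expand_inf:
  "f = rconst (1/3) * tvar \<longleftrightarrow> ratfun_expand fls_X_inv f = fls_const (1/3) * fls_X_inv"
  by (metis ratfun_expand_inf_third_t ratfun_expand_inj[OF fls_transcendental_X_inv])

lemma type_B_pair_01:
  assumes "A4_rational_solution \<alpha> f" "type_B_at 0 f" "\<alpha> 0 + \<alpha> 1 + \<alpha> 2 + \<alpha> 3 + \<alpha> 4 = 1"
    and "\<alpha> 0 = 1/3" "\<alpha> 1 = 1/3" "\<alpha> 3 = 0"
  shows "f 0 = rconst (1/3) * tvar \<and> f 1 = rconst (1/3) * tvar
    \<and> f 2 + f 4 = rconst (1/3) * tvar \<and> f 3 = 0"
  using A4_type_B_at_inf.pair_01_unique[OF A4_type_B_at_inf_expand[OF assms(1-3)] assms(4-6)]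
  by (simp add: eq_third_t_iff_expand_inf ratfun_expand_add[OF fls_transcendental_X_inv]
      ratfun_expand_eq_0_iff[OF fls_transcendental_X_inv])

lemma type_B_pair_12:
  assumes "A4_rational_solution \<alpha> f" "type_B_at 0 f" "\<alpha> 0 + \<alpha> 1 + \<alpha> 2 + \<alpha> 3 + \<alpha> 4 = 1"
    and "\<alpha> 1 = 1/3" "\<alpha> 2 = 1/3" "\<alpha> 4 = 0"
  shows "f 1 = rconst (1/3) * tvar \<and> f 2 = rconst (1/3) * tvar
    \<and> f 3 + f 0 = rconst (1/3) * tvar \<and> f 4 = 0"
  using A4_type_B_at_inf.pair_12_unique[OF A4_type_B_at_inf_expand[OF assms(1-3)] assms(4-6)]
  by (simp add: eq_third_t_iff_expand_inf ratfun_expand_add[OF fls_transcendental_X_inv]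
      ratfun_expand_eq_0_iff[OF fls_transcendental_X_inv])

text \<open>The coefficient of \<open>1/t\<close> at infinity of the first pole is the sum of its finite residues,
  which are integers.\<close>

lemma type_B_coeff_inf_int:
  assumes "A4_rational_solution \<alpha> f" "type_B_at 0 f" "\<alpha> 0 + \<alpha> 1 + \<alpha> 2 + \<alpha> 3 + \<alpha> 4 = 1"
  shows "\<alpha> 1 - \<alpha> 2 - 3 * \<alpha> 3 - \<alpha> 4 \<in> \<int>"
proof -
  have "simple_pole_int_residue (ratfun_expand (fls_at z) (f 0))" for z
    using A4_system_simple_poles[OF A4_system_expand[OF assms(1) fls_transcendental_at
        ratfun_expand_at_rderiv]] by (simp add: fls_at_def)
  then have "ratfun_expand fls_X_inv (f 0) $$ 1 \<in> \<int>"
    by (simp add: coeff_inf_eq_sum_residues simple_pole_int_residue_def Ints_sum)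
  then show ?thesis
    using A4_type_B_at_inf.F0_coeff_1[OF A4_type_B_at_inf_expand[OF assms]] by simp
qed

lemma type_B_pair_01_Re_alpha_4:
  assumes "A4_rational_solution \<alpha> f" "type_B_at 0 f" "\<alpha> 0 + \<alpha> 1 + \<alpha> 2 + \<alpha> 3 + \<alpha> 4 = 1"
    and "\<alpha> 0 = 1/3" "\<alpha> 1 = 1/3" "\<alpha> 3 = 0"
  shows "Re (\<alpha> 4) \<le> 0"
proof -
  have f: "f 0 = rconst (1/3) * tvar" "f 1 = rconst (1/3) * tvar"
    "f 2 = rconst (1/3) * tvar - f 4" "f 3 = 0"
    using type_B_pair_01[OF assms] by (auto simp: algebra_simps)
  have "rderiv (f 4) = f 4 * (f 0 - f 1 + f 2 - f 3) + rconst (\<alpha> 4)"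
    using A4_system_eqs(5)[of rderiv] assms(1) by (simp add: A4_rational_solution_iff_system)
  also have "\<dots> = f 4 * (rconst (-1) * f 4 + Fract [:0, 1/3:] 1) + rconst (\<alpha> 4)"
    unfolding f third_t_eq_Fract by (simp add: rconst_uminus rconst_1 algebra_simps)
  finally have "Re (- ratfun_expand fls_X_inv (f 4) $$ 1) \<le> 0"
    using riccati_coeff_inf_sign[of "f 4" "-1"] by simp
  then show ?thesis
    using A4_type_B_at_inf.F4_coeff_1[OF A4_type_B_at_inf_expand[OF assms(1-3)]] by simp
qed

lemma type_B_pair_12_Re_alpha_3:
  assumes "A4_rational_solution \<alpha> f" "type_B_at 0 f" "\<alpha> 0 + \<alpha> 1 + \<alpha> 2 + \<alpha> 3 + \<alpha> 4 = 1"
    and "\<alpha> 1 = 1/3" "\<alpha> 2 = 1/3" "\<alpha> 4 = 0"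
  shows "Re (\<alpha> 3) \<le> 0"
proof -
  have f: "f 1 = rconst (1/3) * tvar" "f 2 = rconst (1/3) * tvar"
    "f 0 = rconst (1/3) * tvar - f 3" "f 4 = 0"
    using type_B_pair_12[OF assms] by (auto simp: algebra_simps)
  have "rderiv (f 3) = f 3 * (f 4 - f 0 + f 1 - f 2) + rconst (\<alpha> 3)"
    using A4_system_eqs(4)[of rderiv] assms(1) by (simp add: A4_rational_solution_iff_system)
  also have "\<dots> = f 3 * (rconst 1 * f 3 + - (rconst (1/3) * tvar)) + rconst (\<alpha> 3)"
    unfolding f by (simp add: rconst_1 algebra_simps)
  also have "- (rconst (1/3) * tvar) = Fract (- [:0, 1/3:]) 1"
    by (simp add: third_t_eq_Fract minus_fract)
  finally have "Re (ratfun_expand fls_X_inv (f 3) $$ 1) \<le> 0"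
    using riccati_coeff_inf_sign[of "f 3" 1] by simp
  then show ?thesis
    using A4_type_B_at_inf.F3_coeff_1[OF A4_type_B_at_inf_expand[OF assms(1-3)]] by simp
qed

lemma type_B_solution_explicit:
  assumes "A4_rational_solution \<alpha> f" "type_B_at 0 f"
    and "\<alpha> 0 = 1/3" "\<alpha> 1 = 1/3" "\<alpha> 2 = 1/3" "\<alpha> 3 = 0" "\<alpha> 4 = 0"
  shows "\<forall>j<5. f j = (if j < 3 then rconst (1/3) * tvar else 0)"
proof -
  have sum: "\<alpha> 0 + \<alpha> 1 + \<alpha> 2 + \<alpha> 3 + \<alpha> 4 = 1" unfolding assms(3-7) by simp
  have f: "f 0 = rconst (1/3) * tvar" "f 1 = rconst (1/3) * tvar"
    "f 2 + f 4 = rconst (1/3) * tvar" "f 3 = 0"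
    using type_B_pair_01[OF assms(1,2) sum assms(3,4,6)] by auto
  have "f 4 = 0"
    using A4_type_B_at_inf.F4_coeff_1[OF A4_type_B_at_inf_expand[OF assms(1,2) sum]] assms(7)
    by (simp add: ratfun_expand_eq_0_iff[OF fls_transcendental_X_inv])
  show ?thesis
  proof (intro allI impI)
    fix j :: nat assume "j < 5"
    then have "j = 0 \<or> j = 1 \<or> j = 2 \<or> j = 3 \<or> j = 4" by arith
    then show "f j = (if j < 3 then rconst (1/3) * tvar else 0)"
      using f \<open>f 4 = 0\<close> by (elim disjE) simp_all
  qed
qed

lemma of_int_div_3_Ints:
  assumes "(of_int n / 3 :: complex) \<in> \<int>"
  shows "3 dvd n"
proof -
  obtain m where "(of_int n / 3 :: complex) = of_int m" using assms by (auto elim: Ints_cases)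
  then have "(of_int n :: complex) = of_int (3 * m)" by (simp add: field_simps)
  then show ?thesis by (simp only: of_int_eq_iff) simp
qed

lemma type_B_at_index_0:
  assumes sol: "A4_rational_solution \<alpha> f" and B: "type_B_at i f" "i < 5"
    and \<alpha>: "\<alpha> = (\<lambda>j. if j < 3 then 1/3 else 0)"
  shows "i = 0"
proof (rule ccontr)
  assume "i \<noteq> 0"
  define \<beta> where "\<beta> = (\<lambda>j. \<alpha> ((i + j) mod 5))"
  define g where "g = (\<lambda>j. f ((i + j) mod 5))"
  have sol': "A4_rational_solution \<beta> g"
    using A4_system_rotate[OF sol[unfolded A4_rational_solution_iff_system] B(2)]
    by (simp add: A4_rational_solution_iff_system \<beta>_def g_def)
  have B': "type_B_at 0 g" using type_B_at_rotate[OF B] by (simp add: g_def)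
  consider "i = 1" | "i = 2" | "i = 3" | "i = 4" using \<open>i \<noteq> 0\<close> B(2) by arith
  then show False
  proof cases
    case 1
    then have "Re (\<beta> 4) \<le> 0" by (intro type_B_pair_01_Re_alpha_4[OF sol' B']) (simp_all add: \<beta>_def \<alpha>)
    then show False by (simp add: \<beta>_def \<alpha> 1)
  next
    case 2
    then have "\<beta> 1 - \<beta> 2 - 3 * \<beta> 3 - \<beta> 4 = of_int (-4) / 3" by (simp add: \<beta>_def \<alpha>)
    moreover have "\<beta> 1 - \<beta> 2 - 3 * \<beta> 3 - \<beta> 4 \<in> \<int>"
      by (rule type_B_coeff_inf_int[OF sol' B']) (simp add: \<beta>_def \<alpha> 2)
    ultimately show False using of_int_div_3_Ints[of "-4"] by simp
  next
    case 3
    then have "\<beta> 1 - \<beta> 2 - 3 * \<beta> 3 - \<beta> 4 = of_int (-5) / 3" by (simp add: \<beta>_def \<alpha>)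
    moreover have "\<beta> 1 - \<beta> 2 - 3 * \<beta> 3 - \<beta> 4 \<in> \<int>"
      by (rule type_B_coeff_inf_int[OF sol' B']) (simp add: \<beta>_def \<alpha> 3)
    ultimately show False using of_int_div_3_Ints[of "-5"] by simp
  next
    case 4
    then have "Re (\<beta> 3) \<le> 0" by (intro type_B_pair_12_Re_alpha_3[OF sol' B']) (simp_all add: \<beta>_def \<alpha>)
    then show False by (simp add: \<beta>_def \<alpha> 4)
  qed
qed

lemma explicit_solution_type_B:
  assumes f: "\<forall>j<5. f j = (if j < 3 then rconst (1/3) * tvar else 0)"
    and "\<alpha> 0 = 1/3" "\<alpha> 1 = 1/3" "\<alpha> 2 = 1/3" "\<alpha> 3 = 0" "\<alpha> 4 = 0"
  shows "A4_rational_solution \<alpha> f \<and> type_B f"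
proof -
  have f_vals: "f 0 = rconst (1/3) * tvar" "f 1 = rconst (1/3) * tvar" "f 2 = rconst (1/3) * tvar"
    "f 3 = 0" "f 4 = 0"
    using f by auto
  have "rconst (1/3) * tvar + rconst (1/3) * tvar + rconst (1/3) * tvar
      = (rconst (1/3) + rconst (1/3) + rconst (1/3)) * tvar"
    by (simp only: distrib_right)
  also have "rconst (1/3) + rconst (1/3) + rconst (1/3) = 1"
    by (simp flip: rconst_add add: rconst_1)
  finally have sum: "rconst (1/3) * tvar + rconst (1/3) * tvar + rconst (1/3) * tvar = tvar"
    by simp
  have "pole_at_inf (rconst (1/3) * tvar)"
    by (auto simp: pole_at_inf_iff ratfun_expand_inf_third_t intro: exI[of _ "-1"])
  moreover have "regular_at_inf 0" by (simp add: regular_at_inf_iff)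
  ultimately have "type_B_at 0 f" using f_vals by (simp add: type_B_at_def numeral_2_eq_2)
  moreover have "A4_rational_solution \<alpha> f"
    unfolding A4_rational_solution_iff_system A4_system_explicit f_vals assms(2-6)
    using sum by (simp add: rderiv_0 rconst_0 rderiv_third_t)
  ultimately show ?thesis unfolding type_B_iff by (metis zero_less_numeral)
qed

theorem lemma3p5:
  fixes f :: "nat \<Rightarrow> ratfun"
  defines "\<alpha> \<equiv> (\<lambda>j::nat. if j < 3 then (1/3 :: complex) else 0)"
  shows "(A4_rational_solution \<alpha> f \<and> type_B f) \<longleftrightarrow>
    (\<forall>j<5. f j = (if j < 3 then rconst (1/3) * tvar else 0))"
proof
  assume "A4_rational_solution \<alpha> f \<and> type_B f"
  then obtain i where sol: "A4_rational_solution \<alpha> f" and B: "type_B_at i f" "i < 5"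
    by (auto simp: type_B_iff)
  then have "i = 0" using type_B_at_index_0 \<alpha>_def by blast
  then show "\<forall>j<5. f j = (if j < 3 then rconst (1/3) * tvar else 0)"
    using type_B_solution_explicit[OF sol] B by (simp add: \<alpha>_def)
next
  assume "\<forall>j<5. f j = (if j < 3 then rconst (1/3) * tvar else 0)"
  then show "A4_rational_solution \<alpha> f \<and> type_B f"
    by (rule explicit_solution_type_B) (simp_all add: \<alpha>_def)
qed

end
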